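(* Let $I=(i_1<i_2<\cdots<i_r)$ be strictly increasing with $r\geq1$, and let $\chi_I=\sum_{\varepsilon\in\{0,1\}^r}a_I^\varepsilon w_I^\varepsilon$ with $a_I^\varepsilon\in\mathcal B$. Then: (A) if $\alpha(\chi_I)+\beta(\chi_I)=\gamma(\chi_I)$, then $\chi_I=a(S_I-w_I)$ for some $a\in\mathcal B$; (B) if $\beta(\chi_I)=\gamma(\chi_I)+\delta(\chi_I)$, then $\chi_I=a(S_I-w'_I)$ for some $a\in\mathcal B$.
   Context: $\mathcal B$ is a graded commutative rational algebra and $W$ a graded rational vector space concentrated in odd degrees with basis $\{w_i\}$ indexed by a totally ordered set. In $\mathcal B\otimes\land W\otimes\land W$ write $w_i^0=w_i=1\otimes w_i\otimes1$, $w_i^1=w'_i=1\otimes1\otimes w_i$, $w_I^\varepsilon=w_{i_1}^{\epsilon_1}\cdots w_{i_r}^{\epsilon_r}$, $w_I=w_{i_1}\cdots w_{i_r}$, $w'_I=w'_{i_1}\cdots w'_{i_r}$, $S_I=(w_{i_1}+w'_{i_1})\cdots(w_{i_r}+w'_{i_r})$. In $\mathcal B\otimes\land W^{\otimes3}$ write $w,w',w''$ for $w$ in the three copies. Algebra maps $\alpha,\beta,\gamma,\delta\colon\mathcal B\otimes\land W\otimes\land W\to\mathcal B\otimes\land W\otimes\land W\otimes\land W$, identity on $\mathcal B$: $\alpha(w)=w,\alpha(w')=w'$; $\beta(w)=w+w',\beta(w')=w''$; $\gamma(w)=w,\gamma(w')=w'+w''$; $\delta(w)=w',\delta(w')=w''$.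 *)

theory Defs
  imports Main "HOL-Library.Product_Lexorder"
begin

text \<open>It is modelled as a ring 'b with a
  grading Bg (Bg n = homogeneous elements of degree n) such that 'b is the direct sum of the
  Bg n, the grading is multiplicative, graded commutativity holds, and every positive integer
  is invertible (i.e. 'b is a Q-algebra).\<close>

definition graded_comm_rational_algebra :: "(int \<Rightarrow> 'b::ring_1 set) \<Rightarrow> bool" where
  "graded_comm_rational_algebra Bg \<longleftrightarrow>
     (\<forall>n. 0 \<in> Bg n \<and> (\<forall>x\<in>Bg n. \<forall>y\<in>Bg n. x + y \<in> Bg n \<and> - x \<in> Bg n)) \<and>
     1 \<in> Bg 0 \<and>
     (\<forall>m n x y. x \<in> Bg m \<longrightarrow> y \<in> Bg n \<longrightarrow> x * y \<in> Bg (m + n)) \<and>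
     (\<forall>x. \<exists>!c :: int \<Rightarrow> 'b. finite {n. c n \<noteq> 0} \<and> (\<forall>n. c n \<in> Bg n) \<and>
            x = sum c {n. c n \<noteq> 0}) \<and>
     (\<forall>m n x y. x \<in> Bg m \<longrightarrow> y \<in> Bg n \<longrightarrow>
            x * y = (if even (m * n) then y * x else - (y * x))) \<and>
     (\<forall>k::nat. k > 0 \<longrightarrow> (\<exists>y::'b. of_nat k * y = 1))"

text \<open>An element of the exterior algebra (over Z) on a totally ordered set of generators 'g
  is given by its coefficient function on finite sets of generators; the set S stands for the
  monomial obtained by multiplying the elements of S in increasing order.
  An element of B \<otimes> (exterior algebra) is likewise a function from sets of generators to 'b
  (its coordinates in the basis of monomials, B-scalars written on the left).\<close>

type_synonym 'g ext = "'g set \<Rightarrow> int"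

definition ext_sign :: "'g::linorder set \<Rightarrow> 'g set \<Rightarrow> int" where
  "ext_sign S T = (-1) ^ card {(x, y). x \<in> S \<and> y \<in> T \<and> y < x}"

text \<open>Product: mono(S) * mono(T) = ext_sign S T * mono(S \<union> T) if S, T disjoint, else 0.\<close>
definition ext_mul :: "'g::linorder ext \<Rightarrow> 'g ext \<Rightarrow> 'g ext" where
  "ext_mul f g = (\<lambda>U. \<Sum>S\<in>Pow U. ext_sign S (U - S) * f S * g (U - S))"

definition ext_one :: "'g ext" where
  "ext_one = (\<lambda>U. if U = {} then 1 else 0)"

definition ext_gen :: "'g \<Rightarrow> 'g ext" where
  "ext_gen x = (\<lambda>U. if U = {x} then 1 else 0)"

definition ext_add :: "'g ext \<Rightarrow> 'g ext \<Rightarrow> 'g ext" where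
  "ext_add f g = (\<lambda>U. f U + g U)"

definition ext_prod :: "'g::linorder ext list \<Rightarrow> 'g ext" where
  "ext_prod xs = foldr ext_mul xs ext_one"

text \<open>Generators of \<and>W \<otimes> \<and>W \<otimes> \<and>W: pairs (i, k), meaning w_i in the k-th copy
  (k = 0: w, k = 1: w', k = 2: w''). \<and>W \<otimes> \<and>W is the subalgebra on copies 0 and 1.
  Since W is concentrated in odd degrees, all generators anticommute.\<close>

definition wg :: "'i \<Rightarrow> nat \<Rightarrow> ('i::linorder \<times> nat) ext" where
  "wg i k = ext_gen (i, k)"

definition eps_set :: "nat \<Rightarrow> nat list set" where
  "eps_set r = {e. length e = r \<and> set e \<subseteq> {0, 1}}"

text \<open>Image of the monomial w_I^\<epsilon> under an algebra map given on generators by phi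
  (phi i k = image of w_i^k).\<close>
definition mono_img :: "('i \<Rightarrow> nat \<Rightarrow> ('i::linorder \<times> nat) ext) \<Rightarrow> 'i list \<Rightarrow> nat list
    \<Rightarrow> ('i \<times> nat) ext" where
  "mono_img phi I e = ext_prod (map2 phi I e)"

text \<open>Image of \<chi>_I = \<Sum>_\<epsilon> a_I^\<epsilon> w_I^\<epsilon> under the algebra map which is the
  identity on B and is given on generators by phi.\<close>
definition map_chi :: "('i \<Rightarrow> nat \<Rightarrow> ('i::linorder \<times> nat) ext) \<Rightarrow> 'i list
    \<Rightarrow> (nat list \<Rightarrow> 'b::ring_1) \<Rightarrow> ('i \<times> nat) set \<Rightarrow> 'b" where
  "map_chi phi I a = (\<lambda>U. \<Sum>e\<in>eps_set (length I). a e * of_int (mono_img phi I e U))"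

definition chi :: "'i::linorder list \<Rightarrow> (nat list \<Rightarrow> 'b::ring_1) \<Rightarrow> ('i \<times> nat) set \<Rightarrow> 'b" where
  "chi I a = map_chi wg I a"

definition alpha_g :: "'i \<Rightarrow> nat \<Rightarrow> ('i::linorder \<times> nat) ext" where
  "alpha_g i k = (if k = 0 then wg i 0 else wg i 1)"

definition beta_g :: "'i \<Rightarrow> nat \<Rightarrow> ('i::linorder \<times> nat) ext" where
  "beta_g i k = (if k = 0 then ext_add (wg i 0) (wg i 1) else wg i 2)"

definition gamma_g :: "'i \<Rightarrow> nat \<Rightarrow> ('i::linorder \<times> nat) ext" where
  "gamma_g i k = (if k = 0 then wg i 0 else ext_add (wg i 1) (wg i 2))"

definition delta_g :: "'i \<Rightarrow> nat \<Rightarrow> ('i::linorder \<times> nat) ext" where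
  "delta_g i k = (if k = 0 then wg i 1 else wg i 2)"

definition S_I :: "'i::linorder list \<Rightarrow> ('i \<times> nat) ext" where
  "S_I I = ext_prod (map (\<lambda>i. ext_add (wg i 0) (wg i 1)) I)"

definition w_I :: "'i::linorder list \<Rightarrow> ('i \<times> nat) ext" where
  "w_I I = ext_prod (map (\<lambda>i. wg i 0) I)"

definition w'_I :: "'i::linorder list \<Rightarrow> ('i \<times> nat) ext" where
  "w'_I I = ext_prod (map (\<lambda>i. wg i 1) I)"

end

theory Submission
  imports Defs
begin

(* Every algebra map in the statement sends a generator w_i^k to a sum of
   copies w_i^t of the same w_i, with t ranging over a set G_k (for instance beta sends w_i
   to w_i + w'_i and w'_i to w''_i, i.e. G_0 = {0,1}, G_1 = {2}).  Hence the image of a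
   monomial w_I^e is, with all signs +1 because I is increasing, the sum of all monomials
   w_{i_1}^{t_1} ... w_{i_r}^{t_r} with t_j in G_{e_j}.  In the coordinates of the exterior
   algebra such a monomial is the "graph" set {(i_1,t_1), ..., (i_r,t_r)}; when G_0 and G_1
   are disjoint, the copy vector t determines e, so the coefficient of the graph of t in the
   image of chi_I is a single coefficient a_e (or 0).  Comparing
   coefficients in the hypotheses of (A) and (B) shows that one exponent vector has
   coefficient 0 and all others share a common coefficient c; chi_eq_multiple_of_S_minus_mono
   turns this into chi_I = c (S_I - w_I^e0). *)

definition gen_sum :: "'i \<Rightarrow> nat set \<Rightarrow> ('i::linorder \<times> nat) ext" where
  "gen_sum i G = (\<lambda>U. of_bool (\<exists>t\<in>G. U = {(i, t)}))"

text \<open>The monomials occurring in \<open>\<Prod>\<^sub>j (\<Sum>\<^sub>t\<^sub>\<in>\<^sub>G\<^sub>j w_{i_j}^t)\<close>: choose one copy \<open>\<tau>\<^sub>j \<in> G\<^sub>j\<close> for every index.\<close>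
definition transversals :: "'i list \<Rightarrow> nat set list \<Rightarrow> ('i \<times> nat) set set" where
  "transversals I Gs = {set (zip I \<tau>) | \<tau>. list_all2 (\<in>) \<tau> Gs}"

lemma ext_sign_ordered:
  fixes S T :: "'g::linorder set"
  assumes "\<forall>x\<in>S. \<forall>y\<in>T. x \<le> y"
  shows "ext_sign S T = 1"
proof -
  have "{(x, y). x \<in> S \<and> y \<in> T \<and> y < x} = {}" using assms by force
  then show ?thesis unfolding ext_sign_def by (metis card.empty power_0)
qed

lemma gen_sum_mul_indicator:
  fixes i :: "'i::linorder"
  assumes above: "\<And>V. V \<in> F \<Longrightarrow> finite V \<and> (\<forall>x\<in>V. i < fst x)"
  shows "ext_mul (gen_sum i G) (\<lambda>V. of_bool (V \<in> F)) U
       = of_bool (U \<in> (\<lambda>(t, V). insert (i, t) V) ` (G \<times> F))"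
proof -
  define Q where "Q = {S \<in> Pow U. \<exists>t\<in>G. S = {(i, t)} \<and> U - S \<in> F}"
  have summand: "ext_sign S (U - S) * gen_sum i G S * of_bool (U - S \<in> F) = of_bool (S \<in> Q)"
    if "S \<in> Pow U" for S
  proof (cases "S \<in> Q")
    case True
    then obtain t where t: "S = {(i, t)}" "U - S \<in> F" "t \<in> G" by (auto simp: Q_def)
    have "\<forall>y\<in>U - S. (i, t) \<le> y"
      using above[OF t(2)] by (auto simp: less_eq_prod_def)
    then show ?thesis using True t by (auto simp: gen_sum_def ext_sign_ordered)
  qed (use that in \<open>auto simp: gen_sum_def Q_def\<close>)
  have Q_unique: "S = S'" if SQ: "S \<in> Q" "S' \<in> Q" for S S'
  proof -
    obtain t t' where t: "S = {(i, t)}" "S' = {(i, t')}" "U - S \<in> F" "(i, t') \<in> U"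
      using SQ unfolding Q_def by blast
    have "t' = t"
    proof (rule ccontr)
      assume "t' \<noteq> t"
      then have "(i, t') \<in> U - S" using t by auto
      then have "i < fst (i, t')" using above[OF t(3)] by blast
      then show False by simp
    qed
    then show ?thesis using t by simp
  qed
  have Q_iff: "Q \<noteq> {} \<longleftrightarrow> U \<in> (\<lambda>(t, V). insert (i, t) V) ` (G \<times> F)"
  proof
    assume "Q \<noteq> {}"
    then obtain t where "t \<in> G" "(i, t) \<in> U" "U - {(i, t)} \<in> F" by (auto simp: Q_def)
    then show "U \<in> (\<lambda>(t, V). insert (i, t) V) ` (G \<times> F)"
      by (intro image_eqI[of _ _ "(t, U - {(i, t)})"]) auto
  next
    assume "U \<in> (\<lambda>(t, V). insert (i, t) V) ` (G \<times> F)"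
    then obtain t V where "t \<in> G" "V \<in> F" "U = insert (i, t) V" by auto
    moreover have "(i, t) \<notin> V" using above[OF \<open>V \<in> F\<close>] by auto
    ultimately have "{(i, t)} \<in> Q" by (auto simp: Q_def)
    then show "Q \<noteq> {}" by blast
  qed
  have fin: "finite (Pow U)" if nonempty: "Q \<noteq> {}"
  proof -
    obtain t where "U - {(i, t)} \<in> F" using nonempty by (auto simp: Q_def)
    then have "finite (U - {(i, t)})" using above by blast
    then show ?thesis by simp
  qed
  have "ext_mul (gen_sum i G) (\<lambda>V. of_bool (V \<in> F)) U = (\<Sum>S\<in>Pow U. of_bool (S \<in> Q))"
    unfolding ext_mul_def by (rule sum.cong) (simp_all add: summand)
  also have "\<dots> = of_bool (Q \<noteq> {})"
  proof (cases "Q = {}")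
    case False
    then obtain S where "Q = {S}" using Q_unique by blast
    moreover have "S \<in> Pow U" using \<open>Q = {S}\<close> by (auto simp: Q_def)
    ultimately show ?thesis using fin[OF False] by simp
  qed simp
  finally show ?thesis using Q_iff by simp
qed

lemma transversals_Nil: "transversals [] [] = {{}}"
  by (auto simp: transversals_def)

lemma transversals_Cons:
  "transversals (i # I) (G # Gs) = (\<lambda>(t, V). insert (i, t) V) ` (G \<times> transversals I Gs)"
proof (intro set_eqI iffI)
  fix U assume "U \<in> transversals (i # I) (G # Gs)"
  then obtain t \<tau> where "t \<in> G" "list_all2 (\<in>) \<tau> Gs" "U = insert (i, t) (set (zip I \<tau>))"
    by (auto simp: transversals_def list_all2_Cons2)
  then show "U \<in> (\<lambda>(t, V). insert (i, t) V) ` (G \<times> transversals I Gs)"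
    by (auto simp: transversals_def)
next
  fix U assume "U \<in> (\<lambda>(t, V). insert (i, t) V) ` (G \<times> transversals I Gs)"
  then obtain t \<tau> where "t \<in> G" "list_all2 (\<in>) \<tau> Gs" "U = insert (i, t) (set (zip I \<tau>))"
    by (auto simp: transversals_def)
  then have "list_all2 (\<in>) (t # \<tau>) (G # Gs)" "U = set (zip (i # I) (t # \<tau>))" by auto
  then show "U \<in> transversals (i # I) (G # Gs)" unfolding transversals_def by blast
qed

lemma transversals_above:
  assumes "sorted_wrt (<) (i # I)" "V \<in> transversals I Gs"
  shows "finite V \<and> (\<forall>x\<in>V. i < fst x)"
  using assms by (auto simp: transversals_def dest: set_zip_leftD)

lemma ext_prod_gen_sums:
  assumes "sorted_wrt (<) I" "length Gs = length I"
  shows "ext_prod (map2 gen_sum I Gs) = (\<lambda>U. of_bool (U \<in> transversals I Gs))"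
  using assms
proof (induction I arbitrary: Gs)
  case Nil
  then show ?case by (auto simp: ext_prod_def ext_one_def transversals_Nil)
next
  case (Cons i I)
  then obtain G Gs' where Gs: "Gs = G # Gs'" by (cases Gs) auto
  have "ext_prod (map2 gen_sum (i # I) Gs) = ext_mul (gen_sum i G) (ext_prod (map2 gen_sum I Gs'))"
    by (simp add: Gs ext_prod_def)
  also have "ext_prod (map2 gen_sum I Gs') = (\<lambda>V. of_bool (V \<in> transversals I Gs'))"
    using Cons by (simp add: Gs)
  finally show ?case
    using gen_sum_mul_indicator[OF transversals_above[OF Cons.prems(1)]]
    by (simp add: Gs transversals_Cons)
qed

lemma set_zip_inj:
  assumes "distinct I" "length \<sigma> = length I" "length \<tau> = length I"
    and "set (zip I \<sigma>) = set (zip I \<tau>)"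
  shows "\<sigma> = \<tau>"
proof (rule nth_equalityI)
  show "length \<sigma> = length \<tau>" using assms by simp
  fix k assume k: "k < length \<sigma>"
  have "(I ! k, \<sigma> ! k) \<in> set (zip I \<sigma>)"
    using assms(2) k by (auto simp: set_zip)
  then have "(I ! k, \<sigma> ! k) \<in> set (zip I \<tau>)"
    using assms(4) by simp
  then obtain j where "I ! j = I ! k" "\<tau> ! j = \<sigma> ! k" "j < length I"
    by (auto simp: set_zip)
  moreover have "j = k" using calculation assms(1,2) k nth_eq_iff_index_eq by metis
  ultimately show "\<sigma> ! k = \<tau> ! k" by simp
qed

text \<open>Monomials containing exactly one copy of each \<open>w_i\<close>, \<open>i \<in> I\<close>; all elements considered here live on them.\<close>
definition graphs :: "'i list \<Rightarrow> ('i \<times> nat) set set" where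
  "graphs I = {set (zip I \<sigma>) | \<sigma>. length \<sigma> = length I}"

lemma transversals_subset_graphs:
  assumes "length Gs = length I"
  shows "transversals I Gs \<subseteq> graphs I"
proof
  fix U assume "U \<in> transversals I Gs"
  then obtain \<tau> where \<tau>: "U = set (zip I \<tau>)" "list_all2 (\<in>) \<tau> Gs"
    by (auto simp: transversals_def)
  then have "length \<tau> = length I" using assms list_all2_lengthD by fastforce
  then show "U \<in> graphs I" unfolding graphs_def \<tau>(1) by blast
qed

lemma graph_in_transversals_iff:
  assumes "distinct I" "length \<sigma> = length I" "length Gs = length I"
  shows "set (zip I \<sigma>) \<in> transversals I Gs \<longleftrightarrow> list_all2 (\<in>) \<sigma> Gs"
proof
  assume "set (zip I \<sigma>) \<in> transversals I Gs"
  then obtain \<tau> where \<tau>: "set (zip I \<sigma>) = set (zip I \<tau>)" "list_all2 (\<in>) \<tau> Gs"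
    by (auto simp: transversals_def)
  then have "length \<tau> = length I" using assms(3) list_all2_lengthD by fastforce
  then show "list_all2 (\<in>) \<sigma> Gs" using set_zip_inj[OF assms(1,2)] \<tau> by simp
qed (auto simp: transversals_def)

lemma mono_img_gen_sums:
  assumes "sorted_wrt (<) I" "length e = length I"
  shows "mono_img (\<lambda>i k. gen_sum i (A k)) I e = (\<lambda>U. of_bool (U \<in> transversals I (map A e)))"
proof -
  have "map2 (\<lambda>i k. gen_sum i (A k)) I e = map2 gen_sum I (map A e)"
    by (simp add: zip_map2 case_prod_beta comp_def)
  then show ?thesis using ext_prod_gen_sums[OF assms(1)] assms(2) by (simp add: mono_img_def)
qed

lemma finite_eps_set: "finite (eps_set r)"
proof -
  have "eps_set r = {e. set e \<subseteq> {0, 1} \<and> length e = r}" by (auto simp: eps_set_def)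
  then show ?thesis using finite_lists_length_eq[of "{0::nat, 1}" r] by simp
qed

definition gen_map :: "nat set \<Rightarrow> nat set \<Rightarrow> 'i \<Rightarrow> nat \<Rightarrow> ('i::linorder \<times> nat) ext" where
  "gen_map G\<^sub>0 G\<^sub>1 = (\<lambda>i k. gen_sum i (if k = 0 then G\<^sub>0 else G\<^sub>1))"

lemma decode_exponents:
  assumes "G\<^sub>0 \<inter> G\<^sub>1 = {}" "length e = length \<sigma>" "set e \<subseteq> {0, 1}"
  shows "list_all2 (\<in>) \<sigma> (map (\<lambda>k. if k = 0 then G\<^sub>0 else G\<^sub>1) e) \<longleftrightarrow>
           set \<sigma> \<subseteq> G\<^sub>0 \<union> G\<^sub>1 \<and> e = map (\<lambda>t. of_bool (t \<in> G\<^sub>1)) \<sigma>"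
  using assms(2,3)
proof (induction \<sigma> arbitrary: e)
  case (Cons t \<sigma>)
  then obtain k e' where "e = k # e'" "k \<in> {0, 1}" by (cases e) auto
  then show ?case using Cons assms(1) by auto
qed simp

lemma map_chi_gen_map_off_graphs:
  assumes "sorted_wrt (<) I" "U \<notin> graphs I"
  shows "map_chi (gen_map G\<^sub>0 G\<^sub>1) I a U = 0"
  unfolding map_chi_def gen_map_def
proof (rule sum.neutral, intro ballI)
  fix e assume e: "e \<in> eps_set (length I)"
  define A where "A = (\<lambda>k::nat. if k = 0 then G\<^sub>0 else G\<^sub>1)"
  have "length (map A e) = length I" using e by (simp add: eps_set_def)
  then have "U \<notin> transversals I (map A e)" using transversals_subset_graphs assms(2) by blast
  then show "a e * of_int (mono_img (\<lambda>i k. gen_sum i (if k = 0 then G\<^sub>0 else G\<^sub>1)) I e U) = 0"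
    using mono_img_gen_sums[OF assms(1), of e A] e by (simp add: eps_set_def A_def)
qed

lemma map_chi_gen_map_on_graph:
  assumes "sorted_wrt (<) I" "length \<sigma> = length I" "G\<^sub>0 \<inter> G\<^sub>1 = {}"
  shows "map_chi (gen_map G\<^sub>0 G\<^sub>1) I a (set (zip I \<sigma>)) =
           (if set \<sigma> \<subseteq> G\<^sub>0 \<union> G\<^sub>1 then a (map (\<lambda>t. of_bool (t \<in> G\<^sub>1)) \<sigma>) else 0)"
proof -
  define e\<^sub>\<sigma> where "e\<^sub>\<sigma> = (map (\<lambda>t. of_bool (t \<in> G\<^sub>1)) \<sigma> :: nat list)"
  have distinct: "distinct I" using assms(1) by (simp add: strict_sorted_iff)
  have term_eq: "a e * of_int (mono_img (gen_map G\<^sub>0 G\<^sub>1) I e (set (zip I \<sigma>)))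
      = a e * of_bool (set \<sigma> \<subseteq> G\<^sub>0 \<union> G\<^sub>1 \<and> e = e\<^sub>\<sigma>)"
    if e: "e \<in> eps_set (length I)" for e
  proof -
    define A where "A = (\<lambda>k::nat. if k = 0 then G\<^sub>0 else G\<^sub>1)"
    have len: "length e = length I" "set e \<subseteq> {0, 1}" using e by (auto simp: eps_set_def)
    have "mono_img (gen_map G\<^sub>0 G\<^sub>1) I e (set (zip I \<sigma>))
        = of_bool (set (zip I \<sigma>) \<in> transversals I (map A e))"
      using mono_img_gen_sums[OF assms(1) len(1)] by (simp add: gen_map_def A_def)
    also have "\<dots> = of_bool (list_all2 (\<in>) \<sigma> (map A e))"
      using graph_in_transversals_iff[OF distinct assms(2)] len by simp
    also have "\<dots> = of_bool (set \<sigma> \<subseteq> G\<^sub>0 \<union> G\<^sub>1 \<and> e = e\<^sub>\<sigma>)"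
      unfolding A_def e\<^sub>\<sigma>_def
      by (subst decode_exponents[OF assms(3)]) (use len assms(2) in simp_all)
    finally show ?thesis by simp
  qed
  have "e\<^sub>\<sigma> \<in> eps_set (length I)" using assms(2) by (auto simp: eps_set_def e\<^sub>\<sigma>_def)
  then show ?thesis
    unfolding map_chi_def using finite_eps_set
    by (simp add: term_eq Int_def Collect_conv_if e\<^sub>\<sigma>_def)
qed

lemma generator_images_as_gen_maps:
  "alpha_g = gen_map {0} {1}"
  "beta_g = gen_map {0, 1} {2}"
  "gamma_g = gen_map {0} {1, 2}"
  "delta_g = gen_map {1} {2}"
  by (auto simp: fun_eq_iff gen_map_def gen_sum_def wg_def ext_gen_def ext_add_def
      alpha_g_def beta_g_def gamma_g_def delta_g_def)

text \<open>\<open>\<alpha>\<close> is the inclusion, so it fixes \<open>\<chi>_I\<close>.\<close>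
lemma chi_eq_alpha_image: "chi I a = map_chi alpha_g I a"
proof -
  have same: "map2 wg I e = map2 alpha_g I e" if "set e \<subseteq> {0, 1}" for e :: "nat list"
    using that by (auto intro!: map_cong dest: set_zip_rightD simp: alpha_g_def)
  show ?thesis
    unfolding chi_def map_chi_def mono_img_def
    by (intro ext sum.cong refl) (simp add: eps_set_def same)
qed

lemma image_coefficients_on_graph:
  assumes "sorted_wrt (<) I" "length \<sigma> = length I"
  shows "map_chi alpha_g I a (set (zip I \<sigma>)) = (if set \<sigma> \<subseteq> {0, 1} then a \<sigma> else 0)"
    and "map_chi beta_g I a (set (zip I \<sigma>)) =
           (if set \<sigma> \<subseteq> {0, 1, 2} then a (map (\<lambda>t. of_bool (t = 2)) \<sigma>) else 0)"
    and "map_chi gamma_g I a (set (zip I \<sigma>)) =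
           (if set \<sigma> \<subseteq> {0, 1, 2} then a (map (\<lambda>t. of_bool (t \<noteq> 0)) \<sigma>) else 0)"
    and "map_chi delta_g I a (set (zip I \<sigma>)) =
           (if set \<sigma> \<subseteq> {1, 2} then a (map (\<lambda>t. of_bool (t = 2)) \<sigma>) else 0)"
proof -
  note on_graph = map_chi_gen_map_on_graph[OF assms]
  have "map (\<lambda>t. of_bool (t = 1)) \<sigma> = \<sigma>" if "set \<sigma> \<subseteq> {0, 1}"
    using that by (intro map_idI) auto
  then show "map_chi alpha_g I a (set (zip I \<sigma>)) = (if set \<sigma> \<subseteq> {0, 1} then a \<sigma> else 0)"
    by (simp add: generator_images_as_gen_maps on_graph insert_commute)
  have gamma: "map_chi gamma_g I a (set (zip I \<sigma>)) =
      (if set \<sigma> \<subseteq> {0} \<union> {1, 2} then a (map (\<lambda>t. of_bool (t \<in> {1, 2})) \<sigma>) else 0)"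
    unfolding generator_images_as_gen_maps by (rule on_graph) simp
  have pattern: "map (\<lambda>t. of_bool (t \<in> {1, 2})) \<sigma> = (map (\<lambda>t. of_bool (t \<noteq> 0)) \<sigma> :: nat list)"
    if "set \<sigma> \<subseteq> {0, 1, 2}"
    using that by (intro map_cong) auto
  have "{0} \<union> {1, 2} = {0, 1, 2 :: nat}" by auto
  then show "map_chi gamma_g I a (set (zip I \<sigma>)) =
           (if set \<sigma> \<subseteq> {0, 1, 2} then a (map (\<lambda>t. of_bool (t \<noteq> 0)) \<sigma>) else 0)"
    using gamma pattern by presburger
qed (simp_all add: generator_images_as_gen_maps map_chi_gen_map_on_graph[OF assms] insert_commute)

lemma map2_replicate: "map2 f xs (replicate (length xs) y) = map (\<lambda>x. f x y) xs"
  by (induction xs) auto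

lemma S_I_as_gen_sums: "S_I I = ext_prod (map2 gen_sum I (replicate (length I) {0, 1}))"
proof -
  have "gen_sum i {0, 1} = ext_add (wg i 0) (wg i 1)" for i :: 'a
    by (auto simp: fun_eq_iff gen_sum_def ext_add_def wg_def ext_gen_def)
  then show ?thesis by (simp add: S_I_def map2_replicate)
qed

lemma w_I_as_mono_img:
  "w_I I = mono_img wg I (replicate (length I) 0)"
  "w'_I I = mono_img wg I (replicate (length I) 1)"
  by (simp_all add: w_I_def w'_I_def mono_img_def map2_replicate)

lemma S_I_values:
  assumes "sorted_wrt (<) I"
  shows "length \<sigma> = length I \<Longrightarrow> S_I I (set (zip I \<sigma>)) = of_bool (set \<sigma> \<subseteq> {0, 1})"
    and "U \<notin> graphs I \<Longrightarrow> S_I I U = 0"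
proof -
  have distinct: "distinct I" using assms by (simp add: strict_sorted_iff)
  note S = S_I_as_gen_sums ext_prod_gen_sums[OF assms]
  show "length \<sigma> = length I \<Longrightarrow> S_I I (set (zip I \<sigma>)) = of_bool (set \<sigma> \<subseteq> {0, 1})"
    by (simp add: S graph_in_transversals_iff[OF distinct] list_all2_conv_all_nth subset_code(1)
        all_set_conv_all_nth)
  show "U \<notin> graphs I \<Longrightarrow> S_I I U = 0"
    using transversals_subset_graphs[of "replicate (length I) {0, 1}" I] by (auto simp: S)
qed

lemma mono_img_wg_values:
  assumes "sorted_wrt (<) I" "length e = length I"
  shows "length \<sigma> = length I \<Longrightarrow> mono_img wg I e (set (zip I \<sigma>)) = of_bool (\<sigma> = e)"
    and "U \<notin> graphs I \<Longrightarrow> mono_img wg I e U = 0"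
proof -
  have distinct: "distinct I" using assms by (simp add: strict_sorted_iff)
  have "wg = (\<lambda>i k. gen_sum i {k})"
    by (auto simp: fun_eq_iff gen_sum_def wg_def ext_gen_def)
  note M = this mono_img_gen_sums[OF assms]
  show "length \<sigma> = length I \<Longrightarrow> mono_img wg I e (set (zip I \<sigma>)) = of_bool (\<sigma> = e)"
    using assms(2) by (simp add: M graph_in_transversals_iff[OF distinct] list_all2_map2 list_all2_eq)
  show "U \<notin> graphs I \<Longrightarrow> mono_img wg I e U = 0"
    using transversals_subset_graphs[of "map (\<lambda>k. {k}) e" I] assms(2) by (auto simp: M)
qed

lemma chi_eq_multiple_of_S_minus_mono:
  assumes sorted: "sorted_wrt (<) I"
    and e\<^sub>0: "e\<^sub>0 \<in> eps_set (length I)" "a e\<^sub>0 = 0"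
    and const: "\<And>e. e \<in> eps_set (length I) \<Longrightarrow> e \<noteq> e\<^sub>0 \<Longrightarrow> a e = c"
  shows "chi I a = (\<lambda>U. c * of_int (S_I I U - mono_img wg I e\<^sub>0 U))"
proof
  fix U
  have len\<^sub>0: "length e\<^sub>0 = length I" using e\<^sub>0(1) by (simp add: eps_set_def)
  show "chi I a U = c * of_int (S_I I U - mono_img wg I e\<^sub>0 U)"
  proof (cases "U \<in> graphs I")
    case True
    then obtain \<sigma> where \<sigma>: "length \<sigma> = length I" "U = set (zip I \<sigma>)"
      by (auto simp: graphs_def)
    have "chi I a U = (if set \<sigma> \<subseteq> {0, 1} then a \<sigma> else 0)"
      unfolding chi_eq_alpha_image \<sigma>(2) by (rule image_coefficients_on_graph(1)[OF sorted \<sigma>(1)])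
    moreover have "\<sigma> \<in> eps_set (length I) \<longleftrightarrow> set \<sigma> \<subseteq> {0, 1}"
      using \<sigma>(1) by (simp add: eps_set_def)
    ultimately show ?thesis
      using S_I_values(1)[OF sorted \<sigma>(1)] mono_img_wg_values(1)[OF sorted len\<^sub>0 \<sigma>(1)]
        const[of \<sigma>] e\<^sub>0 by (auto simp: \<sigma>(2))
  next
    case False
    then show ?thesis
      using S_I_values(2)[OF sorted] mono_img_wg_values(2)[OF sorted len\<^sub>0]
        map_chi_gen_map_off_graphs[OF sorted]
      by (simp add: chi_eq_alpha_image generator_images_as_gen_maps)
  qed
qed

lemma non_constant_exponents:
  assumes "e \<in> eps_set r" "e \<noteq> replicate r k" "k \<in> {0, 1}"
  shows "1 - k \<in> set e"
proof (rule ccontr)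
  assume "1 - k \<notin> set e"
  then have "\<forall>t\<in>set e. t = k" using assms(1,3) by (auto simp: eps_set_def)
  then have "e = replicate r k" using assms(1) replicate_length_same by (fastforce simp: eps_set_def)
  then show False using assms(2) by simp
qed

text \<open>Part (A): at the graph of \<open>0\<dots>0\<close> the hypothesis reads \<open>a_0 + a_0 = a_0\<close>; at the graph of
  \<open>e + 1\<dots>1\<close> (copy 2 wherever \<open>e\<close> is 1) it reads \<open>0 + a_e = a_{1\<dots>1}\<close>.\<close>
lemma part_A:
  fixes I :: "'i::linorder list" and a :: "nat list \<Rightarrow> 'b::ring_1"
  assumes sorted: "sorted_wrt (<) I"
    and H: "(\<lambda>U. map_chi alpha_g I a U + map_chi beta_g I a U) = map_chi gamma_g I a"
  shows "\<exists>c. chi I a = (\<lambda>U. c * of_int (S_I I U - w_I I U))"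
proof -
  define r where "r = length I"
  define zero one where "zero = replicate r (0::nat)" and "one = replicate r (1::nat)"
  have H_at: "map_chi alpha_g I a (set (zip I \<sigma>)) + map_chi beta_g I a (set (zip I \<sigma>))
      = map_chi gamma_g I a (set (zip I \<sigma>))" for \<sigma>
    using fun_cong[OF H, of "set (zip I \<sigma>)"] by simp
  note coeff = image_coefficients_on_graph[OF sorted]
  have "length zero = length I" "set zero \<subseteq> {0, 1}" "set zero \<subseteq> {0, 1, 2}"
    "map (\<lambda>t. of_bool (t = 2)) zero = zero" "map (\<lambda>t. of_bool (t \<noteq> 0)) zero = zero"
    by (auto simp: zero_def r_def map_replicate)
  then have "a zero + a zero = a zero"
    using H_at[of zero] by (simp add: coeff)
  then have a_zero: "a zero = 0" by simp
  have a_const: "a e = a one" if e: "e \<in> eps_set r" "e \<noteq> zero" for e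
  proof -
    define \<sigma> where "\<sigma> = map Suc e"
    have e01: "set e \<subseteq> {0, 1}" using e by (auto simp: eps_set_def)
    have "1 \<in> set e" using non_constant_exponents[OF e[unfolded zero_def]] by simp
    then have "\<not> set \<sigma> \<subseteq> {0, 1}" by (force simp: \<sigma>_def)
    moreover have "length \<sigma> = length I" "set \<sigma> \<subseteq> {0, 1, 2}"
      using e e01 by (auto simp: \<sigma>_def eps_set_def r_def)
    moreover have "map (\<lambda>t. of_bool (t = 2)) \<sigma> = e"
      using e01 by (auto simp: \<sigma>_def intro!: map_idI)
    moreover have "map (\<lambda>t. of_bool (t \<noteq> 0)) \<sigma> = one"
      using e by (simp add: \<sigma>_def one_def eps_set_def r_def comp_def map_replicate_const)
    ultimately show ?thesis using H_at[of \<sigma>] by (simp add: coeff)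
  qed
  have "zero \<in> eps_set (length I)" by (auto simp: eps_set_def zero_def r_def)
  then have "chi I a = (\<lambda>U. a one * of_int (S_I I U - mono_img wg I zero U))"
    using a_zero a_const by (intro chi_eq_multiple_of_S_minus_mono[OF sorted]) (simp_all add: r_def)
  then show ?thesis by (auto simp: w_I_as_mono_img zero_def r_def)
qed

text \<open>Part (B): at the graph of \<open>1\<dots>1\<close> the hypothesis reads \<open>a_0 = a_{1\<dots>1} + a_0\<close>; at the graph
  of any other \<open>e\<close> it reads \<open>a_0 = a_e + 0\<close>.\<close>
lemma part_B:
  fixes I :: "'i::linorder list" and a :: "nat list \<Rightarrow> 'b::ring_1"
  assumes sorted: "sorted_wrt (<) I"
    and H: "map_chi beta_g I a = (\<lambda>U. map_chi gamma_g I a U + map_chi delta_g I a U)"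
  shows "\<exists>c. chi I a = (\<lambda>U. c * of_int (S_I I U - w'_I I U))"
proof -
  define r where "r = length I"
  define zero one where "zero = replicate r (0::nat)" and "one = replicate r (1::nat)"
  have H_at: "map_chi beta_g I a (set (zip I \<sigma>))
      = map_chi gamma_g I a (set (zip I \<sigma>)) + map_chi delta_g I a (set (zip I \<sigma>))" for \<sigma>
    using fun_cong[OF H, of "set (zip I \<sigma>)"] by simp
  note coeff = image_coefficients_on_graph[OF sorted]
  have "length one = length I" "set one \<subseteq> {1, 2}" "set one \<subseteq> {0, 1, 2}"
    "map (\<lambda>t. of_bool (t = 2)) one = zero" "map (\<lambda>t. of_bool (t \<noteq> 0)) one = one"
    by (auto simp: zero_def one_def r_def map_replicate)
  then have "a zero = a one + a zero"
    using H_at[of one] by (simp add: coeff)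
  then have a_one: "a one = 0" by simp
  have a_const: "a e = a zero" if e: "e \<in> eps_set r" "e \<noteq> one" for e
  proof -
    have e01: "set e \<subseteq> {0, 1}" using e by (auto simp: eps_set_def)
    have "0 \<in> set e" using non_constant_exponents[OF e[unfolded one_def]] by simp
    then have "\<not> set e \<subseteq> {1, 2}" by force
    moreover have "length e = length I" "set e \<subseteq> {0, 1, 2}"
      using e e01 by (auto simp: eps_set_def r_def)
    moreover have "map (\<lambda>t. of_bool (t = 2)) e = zero"
      using e e01 by (force simp: zero_def eps_set_def r_def intro!: replicate_eqI)
    moreover have "map (\<lambda>t. of_bool (t \<noteq> 0)) e = e"
      using e01 by (auto intro!: map_idI)
    ultimately show ?thesis using H_at[of e] by (simp add: coeff)
  qed
  have "one \<in> eps_set (length I)" by (auto simp: eps_set_def one_def r_def)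
  then have "chi I a = (\<lambda>U. a zero * of_int (S_I I U - mono_img wg I one U))"
    using a_one a_const by (intro chi_eq_multiple_of_S_minus_mono[OF sorted]) (simp_all add: r_def)
  then show ?thesis by (auto simp: w_I_as_mono_img one_def r_def)
qed

theorem mainTheorem11:
  fixes Bg :: "int \<Rightarrow> 'b::ring_1 set"
    and I :: "'i::linorder list"
    and a :: "nat list \<Rightarrow> 'b"
  assumes "graded_comm_rational_algebra Bg"
    and "sorted_wrt (<) I"
    and "I \<noteq> []"
  shows "((\<lambda>U. map_chi alpha_g I a U + map_chi beta_g I a U) = map_chi gamma_g I a
            \<longrightarrow> (\<exists>c::'b. chi I a = (\<lambda>U. c * of_int (S_I I U - w_I I U))))
       \<and> (map_chi beta_g I a = (\<lambda>U. map_chi gamma_g I a U + map_chi delta_g I a U)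
            \<longrightarrow> (\<exists>c::'b. chi I a = (\<lambda>U. c * of_int (S_I I U - w'_I I U))))"
  using part_A[OF assms(2)] part_B[OF assms(2)] by blast

end
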